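(* Let $k\ge 1$ and $n \ge 3k+1$ be integers, and let $W_n$ be the squared cycle graph on $[n]=\{1,\dots,n\}$. Then every subset $A\subseteq [n]$ with $|A| = 3k-2$ contains an independent set of size $k$ of $W_n$. Consequently, every subset of $[n]$ of cardinality at most $n-3k+2$ is a face of the total cut complex $\Delta_k^t(W_n)$.
   Context: The squared cycle graph $W_n$ is the graph with vertex set $[n]$ and edge set $\{\{i,i+1 \bmod n\},\{i,i+2 \bmod n\} : i=1,\dots,n\}$. An independent set of size $k$ (a $k$-independent set) is a set of $k$ pairwise non-adjacent vertices. For a graph $G=(V,E)$ and $k\ge 1$, the $k$-total cut complex $\Delta_k^t(G)$ is the simplicial complex on $V$ whose facets are the sets $V\setminus S$ where $S$ ranges over independent sets of $G$ of size $k$; equivalently, $\sigma\subseteq V$ is a face iff $V\setminus\sigma$ contains an independent set of size $k$. *)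

theory Defs
  imports Main
begin

definition sq_cycle_adj :: "nat \<Rightarrow> nat \<Rightarrow> nat \<Rightarrow> bool" where
  "sq_cycle_adj n i j \<longleftrightarrow> i \<noteq> j \<and>
     ((int j - int i) mod int n \<in> {1, 2, int n - 1, int n - 2})"

definition sq_cycle_vertices :: "nat \<Rightarrow> nat set" where
  "sq_cycle_vertices n = {1..n}"

definition independent_set :: "'a set \<Rightarrow> ('a \<Rightarrow> 'a \<Rightarrow> bool) \<Rightarrow> 'a set \<Rightarrow> bool" where
  "independent_set V E S \<longleftrightarrow> S \<subseteq> V \<and> (\<forall>x\<in>S. \<forall>y\<in>S. \<not> E x y)"

definition total_cut_complex :: "'a set \<Rightarrow> ('a \<Rightarrow> 'a \<Rightarrow> bool) \<Rightarrow> nat \<Rightarrow> 'a set set" where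
  "total_cut_complex V E k =
     {\<sigma>. \<sigma> \<subseteq> V \<and> (\<exists>S. S \<subseteq> V - \<sigma> \<and> independent_set V E S \<and> card S = k)}"

end

theory Submission
  imports Defs
begin

text \<open>Pad a set A of 3k - 2 vertices to a set of N = 3k + 1 vertices and list it
  increasingly as e 0 < ... < e (N - 1). Positions that are at least 3 apart cyclically modulo N
  give vertices that are at least 3 apart around the n-cycle, hence non-adjacent in W_n. Among
  the N rotations of the progression 0, 3, ..., 3(k - 1) modulo N, an average one has
  k(3k - 2)/(3k + 1) > k - 1 of its positions in A, so some rotation lies entirely in A; its
  positions are cyclically at least 3 apart because 3(k - 1) + 3 < N.\<close>

lemma strict_mono_on_add_diff_le:
  fixes e :: "nat \<Rightarrow> nat"
  assumes mono: "strict_mono_on {..<N} e" and "u \<le> v" "v < N"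
  shows "e u + (v - u) \<le> e v"
  using assms(2,3)
proof (induction v)
  case (Suc v)
  show ?case
  proof (cases "u = Suc v")
    case False
    then have "e u + (v - u) \<le> e v"
      using Suc by simp
    moreover have "e v < e (Suc v)"
      using strict_mono_onD[OF mono] Suc.prems by simp
    ultimately show ?thesis
      using False Suc.prems by simp
  qed simp
qed simp

lemma obtain_strict_mono_enumeration:
  fixes B :: "'a::linorder set"
  assumes "finite B"
  obtains e where "strict_mono_on {..<card B} e" "e ` {..<card B} = B"
proof
  let ?xs = "sorted_list_of_set B"
  have len: "length ?xs = card B"
    by simp
  show "strict_mono_on {..<card B} ((!) ?xs)"
    using sorted_wrt_nth_less[OF strict_sorted_list_of_set] len
    by (auto intro: strict_mono_onI)
  show "(!) ?xs ` {..<card B} = B"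
    using assms len bij_betw_nth[of ?xs] by (simp add: bij_betw_def)
qed

lemma obtain_strict_mono_enumeration_between:
  fixes A V :: "'a::linorder set"
  assumes "A \<subseteq> V" "finite V" "card A \<le> N" "N \<le> card V"
  obtains e where "strict_mono_on {..<N} e" "A \<subseteq> e ` {..<N}" "e ` {..<N} \<subseteq> V"
proof -
  obtain B where B: "A \<subseteq> B" "B \<subseteq> V" "card B = N"
    using exists_subset_between[OF assms(3,4,1,2)] by blast
  moreover have "finite B"
    using B(2) assms(2) by (rule finite_subset)
  ultimately show thesis
    using obtain_strict_mono_enumeration that by metis
qed

lemma mod_add_cyclic_far:
  fixes N p t :: nat
  assumes "p < N" "3 \<le> t" "t + 3 \<le> N"
  defines "q \<equiv> (p + t) mod N"
  shows "p < q \<and> 3 \<le> q - p \<and> q - p + 3 \<le> N \<or> q < p \<and> 3 \<le> p - q \<and> p - q + 3 \<le> N"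
proof (cases "p + t < N")
  case True
  then show ?thesis
    using assms by simp
next
  case False
  then have "q = p + t - N"
    using assms by (simp add: mod_if)
  then show ?thesis
    using assms(2,3) False by arith
qed

lemma card_mod_shift_preimage:
  fixes A :: "nat set"
  assumes "A \<subseteq> {..<N}"
  shows "card {c \<in> {..<N}. (c + t) mod N \<in> A} = card A"
proof (cases "N = 0")
  case False
  define \<rho> where "\<rho> c = (c + t) mod N" for c
  have "inj_on \<rho> {..<N}"
  proof (rule inj_onI)
    fix a b assume "a \<in> {..<N}" "b \<in> {..<N}" "\<rho> a = \<rho> b"
    from \<open>\<rho> a = \<rho> b\<close> have "a mod N = b mod N"
      by (simp add: \<rho>_def mod_eq_iff_dvd_symdiff_nat)
    then show "a = b"
      using \<open>a \<in> {..<N}\<close> \<open>b \<in> {..<N}\<close> by simp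
  qed
  moreover have "\<rho> ` {..<N} = {..<N}"
    using False by (intro endo_inj_surj[OF _ _ \<open>inj_on \<rho> {..<N}\<close>]) (auto simp: \<rho>_def)
  ultimately have "bij_betw \<rho> {c \<in> {..<N}. \<rho> c \<in> A} A"
    using assms by (auto simp: bij_betw_def inj_on_def)
  then show ?thesis
    by (simp add: bij_betw_same_card \<rho>_def)
qed (use assms in simp)

text \<open>Averaging over the N rotations: each element of A is hit by exactly k of the pairs
  (c, j) with c < N and j < k.\<close>


lemma exists_mod_progression_subset:
  fixes A :: "nat set" and N k d :: nat
  assumes A: "A \<subseteq> {..<N}" and dense: "N * (k - 1) < k * card A"
  obtains c where "c < N" "\<And>j. j < k \<Longrightarrow> (c + d * j) mod N \<in> A"
proof -
  define hits where "hits c = card {j \<in> {..<k}. (c + d * j) mod N \<in> A}" for c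
  have "(\<Sum>c<N. hits c) = (\<Sum>c<N. \<Sum>j<k. if (c + d * j) mod N \<in> A then 1 else 0)"
    by (simp add: hits_def sum.If_cases Int_def)
  also have "\<dots> = (\<Sum>j<k. \<Sum>c<N. if (c + d * j) mod N \<in> A then 1 else 0)"
    by (rule sum.swap)
  also have "\<dots> = (\<Sum>j<k. card {c \<in> {..<N}. (c + d * j) mod N \<in> A})"
    by (simp add: sum.If_cases Int_def)
  also have "\<dots> = k * card A"
    using card_mod_shift_preimage[OF A] by simp
  finally have total: "(\<Sum>c<N. hits c) = k * card A" .
  obtain c where c: "c < N" "k \<le> hits c"
  proof (rule ccontr)
    assume "\<not> thesis"
    then have "(\<Sum>c<N. hits c) \<le> (\<Sum>c<N. k - 1)"
      using that by (intro sum_mono) force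
    then show False
      using total dense by (simp add: mult.commute)
  qed
  have "{j \<in> {..<k}. (c + d * j) mod N \<in> A} = {..<k}"
    using c(2) by (intro card_seteq) (auto simp: hits_def)
  then show thesis
    using that c(1) by blast
qed

lemma independent_set_image_of_ordered_pairs:
  fixes s :: "'i::linorder \<Rightarrow> 'a"
  assumes "s ` I \<subseteq> V" "\<And>x. \<not> E x x"
    and "\<And>i j. i \<in> I \<Longrightarrow> j \<in> I \<Longrightarrow> i < j \<Longrightarrow> s i \<noteq> s j \<and> \<not> E (s i) (s j) \<and> \<not> E (s j) (s i)"
  shows "independent_set V E (s ` I)" "inj_on s I"
proof -
  have pair: "s i \<noteq> s j \<and> \<not> E (s i) (s j)" if "i \<in> I" "j \<in> I" "i \<noteq> j" for i j
    using assms(3)[of i j] assms(3)[of j i] that by (cases i j rule: linorder_cases) auto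
  show "independent_set V E (s ` I)"
    using assms(1,2) pair unfolding independent_set_def by (metis imageE)
  show "inj_on s I"
    using pair by (auto intro: inj_onI)
qed

lemma not_sq_cycle_adj_if_far:
  fixes n x y :: nat
  assumes "3 \<le> y - x" "y - x + 3 \<le> n"
  shows "\<not> sq_cycle_adj n x y \<and> \<not> sq_cycle_adj n y x"
proof -
  have fwd: "(int y - int x) mod int n = int (y - x)"
    using assms by (simp add: of_nat_diff)
  have "int x - int y = (int n - int (y - x)) - int n"
    using assms by (simp add: of_nat_diff)
  then have "(int x - int y) mod int n = (int n - int (y - x)) mod int n"
    by (simp only: minus_mod_self2)
  also have "\<dots> = int n - int (y - x)"
    using assms by (intro mod_pos_pos_trivial) auto
  finally have bwd: "(int x - int y) mod int n = int n - int (y - x)" .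
  show ?thesis
    using assms unfolding sq_cycle_adj_def fwd bwd by auto
qed

text \<open>Going around the cycle from e v back to e u passes the N - (v - u) - 1 \<ge> 2 other
  enumerated vertices, so the distance that way is at least 3 as well.\<close>


lemma strict_mono_on_far_not_sq_cycle_adj:
  fixes e :: "nat \<Rightarrow> nat"
  assumes mono: "strict_mono_on {..<N} e" and range: "e ` {..<N} \<subseteq> {1..n}"
    and uv: "u < v" "v < N" "3 \<le> v - u" "v - u + 3 \<le> N"
  shows "\<not> sq_cycle_adj n (e u) (e v) \<and> \<not> sq_cycle_adj n (e v) (e u)"
proof -
  have "e 0 + u \<le> e u" "e u + (v - u) \<le> e v" "e v + (N - 1 - v) \<le> e (N - 1)"
    using strict_mono_on_add_diff_le[OF mono, of 0 u] strict_mono_on_add_diff_le[OF mono, of u v]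
      strict_mono_on_add_diff_le[OF mono, of v "N - 1"] uv by auto
  moreover have "1 \<le> e 0" "e (N - 1) \<le> n"
    using range uv by (auto simp: image_subset_iff)
  ultimately show ?thesis
    using uv by (intro not_sq_cycle_adj_if_far) auto
qed

lemma strict_mono_on_mod_shift_not_sq_cycle_adj:
  fixes e :: "nat \<Rightarrow> nat"
  assumes mono: "strict_mono_on {..<N} e" and range: "e ` {..<N} \<subseteq> {1..n}"
    and "p < N" "3 \<le> t" "t + 3 \<le> N"
  defines "q \<equiv> (p + t) mod N"
  shows "e p \<noteq> e q \<and> \<not> sq_cycle_adj n (e p) (e q) \<and> \<not> sq_cycle_adj n (e q) (e p)"
proof -
  have "q < N"
    using \<open>p < N\<close> by (simp add: q_def)
  moreover have "p < q \<and> 3 \<le> q - p \<and> q - p + 3 \<le> N \<or> q < p \<and> 3 \<le> p - q \<and> p - q + 3 \<le> N"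
    unfolding q_def using assms(3-5) by (rule mod_add_cyclic_far)
  ultimately show ?thesis
    using strict_mono_on_far_not_sq_cycle_adj[OF mono range, of p q]
      strict_mono_on_far_not_sq_cycle_adj[OF mono range, of q p]
      strict_mono_onD[OF mono, of p q] strict_mono_onD[OF mono, of q p] \<open>p < N\<close>
    by auto
qed

lemma sq_cycle_independent_subset:
  fixes n k :: nat and A :: "nat set"
  assumes k: "k \<ge> 1" and n: "3 * k + 1 \<le> n"
    and A: "A \<subseteq> {1..n}" "3 * k - 2 \<le> card A"
  shows "\<exists>S. S \<subseteq> A \<and> independent_set {1..n} (sq_cycle_adj n) S \<and> card S = k"
proof -
  define N where "N = 3 * k + 1"
  obtain A0 where A0: "A0 \<subseteq> A" "card A0 = 3 * k - 2"
    using obtain_subset_with_card_n[OF A(2)] by metis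
  have "A0 \<subseteq> {1..n}" "card A0 \<le> N" "N \<le> card {1..n}"
    using A0 A(1) n by (auto simp: N_def)
  then obtain e where mono: "strict_mono_on {..<N} e"
    and A0_range: "A0 \<subseteq> e ` {..<N}" and range: "e ` {..<N} \<subseteq> {1..n}"
    using obtain_strict_mono_enumeration_between[OF _ finite_atLeastAtMost] by metis
  define P where "P = {p \<in> {..<N}. e p \<in> A0}"
  have "inj_on e P"
    using strict_mono_on_imp_inj_on[OF mono] by (rule inj_on_subset) (auto simp: P_def)
  moreover have "e ` P = A0"
    using A0_range by (auto simp: P_def)
  ultimately have "card P = 3 * k - 2"
    using A0(2) card_image by metis
  moreover have "N * (k - 1) < k * (3 * k - 2)"
    using k by (cases k) (simp_all add: N_def algebra_simps)
  ultimately obtain c where c: "c < N" "\<And>j. j < k \<Longrightarrow> (c + 3 * j) mod N \<in> P"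
    using exists_mod_progression_subset[of P N k 3] by (auto simp: P_def)
  define s where "s j = e ((c + 3 * j) mod N)" for j
  have far: "s i \<noteq> s j \<and> \<not> sq_cycle_adj n (s i) (s j) \<and> \<not> sq_cycle_adj n (s j) (s i)"
    if "i < j" "j < k" for i j
  proof -
    have "c + 3 * j = (c + 3 * i) + 3 * (j - i)"
      using that by simp
    then have "s j = e (((c + 3 * i) mod N + 3 * (j - i)) mod N)"
      by (simp add: s_def mod_add_left_eq add.assoc)
    moreover have "(c + 3 * i) mod N < N" "3 \<le> 3 * (j - i)" "3 * (j - i) + 3 \<le> N"
      using that by (auto simp: N_def)
    ultimately show ?thesis
      using strict_mono_on_mod_shift_not_sq_cycle_adj[OF mono range] by (simp add: s_def)
  qed
  have "s ` {..<k} \<subseteq> {1..n}"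
    using range c(1) by (auto simp: s_def)
  moreover have "\<not> sq_cycle_adj n x x" for x
    by (simp add: sq_cycle_adj_def)
  ultimately have "independent_set {1..n} (sq_cycle_adj n) (s ` {..<k})" "inj_on s {..<k}"
    using far by (auto intro!: independent_set_image_of_ordered_pairs)
  moreover have "s ` {..<k} \<subseteq> A"
    using c(2) A0(1) by (auto simp: s_def P_def)
  ultimately show ?thesis
    by (metis card_image card_lessThan)
qed

theorem lemma3p1:
  fixes n k :: nat
  assumes "k \<ge> 1" and "n \<ge> 3 * k + 1"
  shows "(\<forall>A. A \<subseteq> sq_cycle_vertices n \<and> card A = 3 * k - 2 \<longrightarrow>
            (\<exists>S. S \<subseteq> A \<and> independent_set (sq_cycle_vertices n) (sq_cycle_adj n) S \<and> card S = k))
       \<and> (\<forall>\<sigma>. \<sigma> \<subseteq> sq_cycle_vertices n \<and> card \<sigma> \<le> n - (3 * k - 2) \<longrightarrow>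
            \<sigma> \<in> total_cut_complex (sq_cycle_vertices n) (sq_cycle_adj n) k)"
proof (intro conjI allI impI)
  fix A
  assume "A \<subseteq> sq_cycle_vertices n \<and> card A = 3 * k - 2"
  then show "\<exists>S. S \<subseteq> A \<and> independent_set (sq_cycle_vertices n) (sq_cycle_adj n) S \<and> card S = k"
    using sq_cycle_independent_subset[OF assms] by (simp add: sq_cycle_vertices_def)
next
  fix \<sigma>
  assume \<sigma>: "\<sigma> \<subseteq> sq_cycle_vertices n \<and> card \<sigma> \<le> n - (3 * k - 2)"
  then have "finite \<sigma>"
    by (auto simp: sq_cycle_vertices_def intro: finite_subset)
  then have "card ({1..n} - \<sigma>) = n - card \<sigma>"
    using \<sigma> by (simp add: sq_cycle_vertices_def card_Diff_subset)
  then have "3 * k - 2 \<le> card ({1..n} - \<sigma>)"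
    using \<sigma> assms by linarith
  then show "\<sigma> \<in> total_cut_complex (sq_cycle_vertices n) (sq_cycle_adj n) k"
    using sq_cycle_independent_subset[OF assms, of "{1..n} - \<sigma>"] \<sigma>
    unfolding total_cut_complex_def sq_cycle_vertices_def by blast
qed

end
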